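(* Let $F_1,\dots,F_J\in\mathbb{Z}^2$ ($J\ge2$) be the vertices of a convex polygonal curve in the following sense: the interiors of the segments $\overline{F_iF_{i+1}}$ are mutually disjoint, and writing $\overrightarrow{F_iF_{i+1}}=L_i(\cos\beta_i,\sin\beta_i)$ for $i=1,\dots,J-1$, we have $L_i>0$ and $\beta_{i+1}>\beta_i$. Suppose $\beta_{J-1}-\beta_1\le2\pi$ and set $L=\sum_{i=1}^{J-1}L_i$. Then $$J\le2+(\beta_{J-1}-\beta_1)^{1/3}L^{2/3}.$$ *)

theory Defs
  imports "HOL-Analysis.Analysis"
begin

definition lattice_pt :: "int \<times> int \<Rightarrow> real \<times> real" where
  "lattice_pt p = (real_of_int (fst p), real_of_int (snd p))"

end

theory Submission
  imports Defs
begin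

text \<open>Consecutive edge vectors u, v are nonzero lattice vectors, so |u|, |v| \<ge> 1, and if they turn by
  an angle \<theta> \<in> (0, \<pi>) their cross product |u| |v| sin \<theta> is a positive integer; either way
  \<theta> \<ge> 1 / (|u| |v|). Summing over the J - 2 corners, the total turn \<Theta> is at least
  \<Sum> 1 / (L_i L_(i+1)), which by AM-GM and the convexity of 1 / x^2 is at least (J - 2)^3 / L^2.\<close>

lemma lattice_pt_diff: "lattice_pt (p - q) = lattice_pt p - lattice_pt q"
  by (simp add: lattice_pt_def)

lemma lattice_pt_polar_length_ge_1:
  assumes "lattice_pt p = l *\<^sub>R (cos a, sin a)" and "l > 0"
  shows "l \<ge> 1"
proof -
  have norm2: "real_of_int ((fst p)\<^sup>2 + (snd p)\<^sup>2) = l\<^sup>2"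
    using assms(1) by (auto simp: lattice_pt_def power_mult_distrib simp flip: distrib_left)
  with \<open>l > 0\<close> have "real_of_int ((fst p)\<^sup>2 + (snd p)\<^sup>2) > 0"
    by simp
  then have "(fst p)\<^sup>2 + (snd p)\<^sup>2 \<ge> 1"
    by (simp only: of_int_0_less_iff int_one_le_iff_zero_less)
  then have "l\<^sup>2 \<ge> 1"
    using norm2 by (metis of_int_le_iff of_int_1)
  with \<open>l > 0\<close> show ?thesis
    by (simp add: power2_le_imp_le [of 1 l])
qed

lemma lattice_turn_angle_ge:
  assumes u: "lattice_pt p = l *\<^sub>R (cos a, sin a)" "l > 0"
    and v: "lattice_pt q = m *\<^sub>R (cos b, sin b)" "m > 0"
    and "a < b"
  shows "b - a \<ge> 1 / (l * m)"
proof (cases "b - a \<ge> 1")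
  case True
  have "1 \<le> l * m"
    using lattice_pt_polar_length_ge_1 [OF u] lattice_pt_polar_length_ge_1 [OF v]
    by (metis mult_mono' mult_1 zero_le_one)
  then have "1 / (l * m) \<le> 1"
    by simp
  with True show ?thesis
    by linarith
next
  case False
  have "sin (b - a) > 0"
    using False \<open>a < b\<close> pi_gt3 by (intro sin_gt_zero) auto
  define cross where "cross = fst p * snd q - snd p * fst q"
  have cross_eq: "real_of_int cross = l * m * sin (b - a)"
    using u(1) v(1) by (auto simp: cross_def lattice_pt_def sin_diff algebra_simps)
  with \<open>sin (b - a) > 0\<close> u(2) v(2) have "cross \<ge> 1"
    by (smt (verit) of_int_le_0_iff mult_pos_pos)
  then have "1 \<le> l * m * sin (b - a)"
    using cross_eq by (metis of_int_le_iff of_int_1)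
  also have "\<dots> \<le> l * m * (b - a)"
    using sin_x_le_x [of "b - a"] \<open>a < b\<close> u(2) v(2) by (intro mult_left_mono) auto
  finally show ?thesis
    using u(2) v(2) by (simp add: field_simps)
qed

lemma inverse_square_ge_tangent:
  fixes x c :: real
  assumes "x > 0" "c > 0"
  shows "3 / c\<^sup>2 - 2 * x / c ^ 3 \<le> 1 / x\<^sup>2"
proof -
  have "c ^ 3 - x\<^sup>2 * (3 * c - 2 * x) = (c - x)\<^sup>2 * (c + 2 * x)"
    by (simp add: power2_eq_square power3_eq_cube algebra_simps)
  also have "\<dots> \<ge> 0"
    using assms by simp
  finally have "x\<^sup>2 * (3 * c - 2 * x) \<le> c ^ 3"
    by simp
  then show ?thesis
    using assms by (simp add: field_simps power2_eq_square power3_eq_cube)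
qed

lemma inverse_mult_ge_tangent:
  fixes x y c :: real
  assumes "x > 0" "y > 0" "c > 0"
  shows "3 / c\<^sup>2 - (x + y) / c ^ 3 \<le> 1 / (x * y)"
proof -
  have "x * y \<le> ((x + y) / 2)\<^sup>2"
    using sum_squares_ge_zero [of "x - y" 0] by (simp add: power2_eq_square field_simps)
  have "3 / c\<^sup>2 - (x + y) / c ^ 3 = 3 / c\<^sup>2 - 2 * ((x + y) / 2) / c ^ 3"
    by (simp only: nonzero_mult_div_cancel_left times_divide_eq_right zero_neq_numeral)
  also have "\<dots> \<le> 1 / ((x + y) / 2)\<^sup>2"
    using assms by (intro inverse_square_ge_tangent) auto
  also have "\<dots> \<le> 1 / (x * y)"
    using \<open>x * y \<le> ((x + y) / 2)\<^sup>2\<close> assms by (intro divide_left_mono) auto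
  finally show ?thesis .
qed

lemma sum_inverse_consecutive_products_ge:
  fixes l :: "nat \<Rightarrow> real"
  assumes "n \<ge> 1" and pos: "\<And>i. 1 \<le> i \<Longrightarrow> i \<le> Suc n \<Longrightarrow> l i > 0"
  shows "real n ^ 3 / (\<Sum>i=1..Suc n. l i)\<^sup>2 \<le> (\<Sum>i=1..n. 1 / (l i * l (Suc i)))"
proof -
  define S where "S = (\<Sum>i=1..Suc n. l i)"
  have "S > 0"
    unfolding S_def using pos by (intro sum_pos) auto
  define c where "c = S / real n"
  have "c > 0"
    unfolding c_def using \<open>S > 0\<close> \<open>n \<ge> 1\<close> by simp
  have nonneg: "\<And>i. i \<in> {1..Suc n} \<Longrightarrow> l i \<ge> 0"
    using pos by (simp add: less_imp_le)
  have head: "(\<Sum>i=1..n. l i) \<le> S"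
    unfolding S_def using nonneg by (intro sum_mono2) auto
  have "(\<Sum>i=1..n. l (Suc i)) = (\<Sum>i=2..Suc n. l i)"
    by (simp add: sum.shift_bounds_cl_Suc_ivl [symmetric] numeral_2_eq_2)
  also have "\<dots> \<le> S"
    unfolding S_def using nonneg by (intro sum_mono2) auto
  finally have tail: "(\<Sum>i=1..n. l (Suc i)) \<le> S" .
  \<comment> \<open>Tangent lines of 1 / x^2 at the mean edge length c: equality when all edges are equal.\<close>
  have "real n ^ 3 / S\<^sup>2 = 3 * real n / c\<^sup>2 - 2 * S / c ^ 3"
    unfolding c_def using \<open>S > 0\<close> \<open>n \<ge> 1\<close>
    by (simp add: field_simps power2_eq_square power3_eq_cube)
  also have "\<dots> \<le> 3 * real n / c\<^sup>2 - ((\<Sum>i=1..n. l i) + (\<Sum>i=1..n. l (Suc i))) / c ^ 3"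
    using head tail \<open>c > 0\<close> by (simp add: divide_right_mono)
  also have "\<dots> = (\<Sum>i=1..n. 3 / c\<^sup>2 - (l i + l (Suc i)) / c ^ 3)"
    by (simp add: sum_subtractf sum.distrib flip: sum_divide_distrib)
  also have "\<dots> \<le> (\<Sum>i=1..n. 1 / (l i * l (Suc i)))"
    using pos \<open>c > 0\<close> by (intro sum_mono inverse_mult_ge_tangent) auto
  finally show ?thesis
    unfolding S_def .
qed

lemma le_powr_one_third_mult:
  fixes x t s :: real
  assumes "0 \<le> x" "0 \<le> t" "0 \<le> s" and "x ^ 3 \<le> t * s\<^sup>2"
  shows "x \<le> t powr (1/3) * s powr (2/3)"
proof -
  have "x = (x powr 3) powr (1/3)"
    using \<open>0 \<le> x\<close> by (simp only: powr_powr) simp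
  also have "\<dots> \<le> (t * s powr 2) powr (1/3)"
    using assms by (intro powr_mono2) auto
  also have "\<dots> = t powr (1/3) * s powr (2/3)"
    by (simp add: powr_mult powr_powr)
  finally show ?thesis .
qed

theorem lemma7p1:
  fixes F :: "nat \<Rightarrow> int \<times> int" and L \<beta> :: "nat \<Rightarrow> real" and J :: nat
  assumes "J \<ge> 2"
    and "\<And>i j. \<lbrakk>1 \<le> i; i < J; 1 \<le> j; j < J; i \<noteq> j\<rbrakk> \<Longrightarrow>
           open_segment (lattice_pt (F i)) (lattice_pt (F (Suc i)))
         \<inter> open_segment (lattice_pt (F j)) (lattice_pt (F (Suc j))) = {}"
    and "\<And>i. \<lbrakk>1 \<le> i; i < J\<rbrakk> \<Longrightarrow>
           lattice_pt (F (Suc i)) - lattice_pt (F i) = L i *\<^sub>R (cos (\<beta> i), sin (\<beta> i))"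
    and "\<And>i. \<lbrakk>1 \<le> i; i < J\<rbrakk> \<Longrightarrow> L i > 0"
    and "\<And>i. \<lbrakk>1 \<le> i; Suc i < J\<rbrakk> \<Longrightarrow> \<beta> (Suc i) > \<beta> i"
    and "\<beta> (J - 1) - \<beta> 1 \<le> 2 * pi"
  shows "real J \<le> 2 + (\<beta> (J - 1) - \<beta> 1) powr (1/3) * (\<Sum>i=1..J-1. L i) powr (2/3)"
proof -
  obtain n where J: "J = n + 2"
    using assms(1) by (metis add.commute le_Suc_ex)
  show ?thesis
  proof (cases "n = 0")
    case True
    then show ?thesis using J by simp
  next
    case False
    define S where "S = (\<Sum>i=1..Suc n. L i)"
    have L_pos: "\<And>i. 1 \<le> i \<Longrightarrow> i \<le> Suc n \<Longrightarrow> L i > 0"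
      using assms(4) J by simp
    have "S > 0"
      unfolding S_def using L_pos by (intro sum_pos) auto
    have turn: "1 / (L i * L (Suc i)) \<le> \<beta> (Suc i) - \<beta> i" if "1 \<le> i" "i \<le> n" for i
      using assms(3) [of i] assms(3) [of "Suc i"] assms(5) [of i] L_pos that J
      by (intro lattice_turn_angle_ge [where p = "F (Suc i) - F i"
            and q = "F (Suc (Suc i)) - F (Suc i)"]) (auto simp: lattice_pt_diff)
    have "real n ^ 3 / S\<^sup>2 \<le> (\<Sum>i=1..n. 1 / (L i * L (Suc i)))"
      unfolding S_def using False L_pos by (intro sum_inverse_consecutive_products_ge) auto
    also have "\<dots> \<le> (\<Sum>i=1..n. \<beta> (Suc i) - \<beta> i)"
      using turn by (intro sum_mono) auto
    also have "\<dots> = \<beta> (Suc n) - \<beta> 1"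
      by (simp add: sum_Suc_diff)
    finally have total_turn: "real n ^ 3 / S\<^sup>2 \<le> \<beta> (Suc n) - \<beta> 1" .
    then have "real n ^ 3 \<le> (\<beta> (Suc n) - \<beta> 1) * S\<^sup>2"
      using \<open>S > 0\<close> by (simp add: divide_le_eq)
    moreover have "0 \<le> \<beta> (Suc n) - \<beta> 1"
      using total_turn by (rule order_trans [rotated]) simp
    ultimately have "real n \<le> (\<beta> (Suc n) - \<beta> 1) powr (1/3) * S powr (2/3)"
      using \<open>S > 0\<close> by (intro le_powr_one_third_mult) auto
    then show ?thesis
      using J unfolding S_def by simp
  qed
qed

end
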